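(* Assume the setting below and that the matrix $\Phi$ is positive definite. Then: (i) $\mathcal V_\Phi:=(\mathrm{Id}+\Phi^{-1}\mathcal B)^{-1}$ is single-valued on $\mathbb{R}^{N(3+2M)}$. (ii) For every $\omega^k=(\beta^k,\psi^k,\sigma^k,z^k,\lambda^k)\in\Omega\times\mathbb{R}^N\times\mathbb{R}^N\times\mathbb{R}^{NM}\times\mathbb{R}^{NM}_+$, the point $\omega^{k+1}$ produced by the iteration (IT) equals $\mathcal V_\Phi\circ\mathcal U_\Phi(\omega^k)$, where $\mathcal U_\Phi:=\mathrm{Id}-\Phi^{-1}\mathcal A$; equivalently, $0\in\mathcal A(\omega^k)+\mathcal B(\omega^{k+1})+\Phi(\omega^{k+1}-\omega^k)$. (iii) A point $\omega^*$ is a fixed point of $\mathcal V_\Phi\circ\mathcal U_\Phi$ (equivalently, a steady state of (IT)) if and only if $0\in(\mathcal A+\mathcal B)(\omega^* )$. (iv) If $\omega^*=(\beta^*,\psi^*,\sigma^*,z^*,\lambda^* )$ satisfies $0\in(\mathcal A+\mathcal B)(\omega^* )$, then $\sigma^*=\frac1N(\mathbf 1^\top\beta^* )\mathbf 1_N$, $\lambda^*=\mathbf 1_N\otimes\gamma_2$ for some $\gamma_2\in\mathbb{R}^M_+$, and $\beta^*$ is a v-GNE of the game, i.e. $\beta^*\in K$ and $(\beta-\beta^* )^\top F(\beta^* )\ge0$ for all $\beta\in K$.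
   Context: Game data: integers $N\ge2$ (aggregators) and $H\ge1$ (lines), $M:=2N+2H$. Reals $r\ge0$, $\alpha>0$, $a_n,b_n>0$, bid bounds $\underline\beta<\bar\beta$, load capacities $\hat x\in\mathbb{R}^N$, line capacities $\hat f\in\mathbb{R}^H_+$, net loads $e\in\mathbb{R}^N$, and a distribution-factor matrix $\Pi\in\mathbb{R}^{H\times N}$. Let $A:=I_N-\frac1N\mathbf 1\mathbf 1^\top$, $c:=\frac rN\mathbf 1_N$, $$\tilde A:=\begin{bmatrix}A\\-A\\-\Pi A\\\Pi A\end{bmatrix}\in\mathbb{R}^{M\times N},\qquad d:=\begin{bmatrix}\hat x-c\\c\\\hat f-\Pi(e-c)\\\hat f+\Pi(e-c)\end{bmatrix}\in\mathbb{R}^M.$$ Let $u_n$ be the $n$-th standard basis vector of $\mathbb{R}^N$, and define $$d_n:=\tfrac1N\big(-c;\ c;\ \hat f+\Pi c;\ \hat f-\Pi c\big)+\big(\hat x_nu_n;\ 0;\ -e_n\Pi u_n;\ e_n\Pi u_n\big),$$ so that $\sum_n d_n=d$. Let $\Omega:=[\underline\beta,\bar\beta]^N$ and $K:=\{\beta\in\Omega:\tilde A\beta\le d\}$. Standing assumption: some $\beta\in\Omega$ satisfies $\tilde A\beta<d$ componentwise. With $C_n'(x)=2a_nx+b_n$, the map $F:\mathbb{R}^N\to\mathbb{R}^N$ is defined by $$F_n(\beta)=\tfrac{N-1}{N}C_n'\big(\tfrac{r-\mathbf 1^\top\beta}{N}+\beta_n\big)+\tfrac{(\mathbf 1^\top\beta-r)(N-2)+N\beta_n}{\alpha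 N^2}$$ (the pseudo-gradient of the aggregators' costs). A v-GNE is a solution of the variational inequality $\mathrm{VI}(K,F)$. The map $\hat F:\mathbb{R}^N\times\mathbb{R}^N\to\mathbb{R}^N$ is defined by $$\hat F_n(\beta,\sigma)=\tfrac{N-1}{N}C_n'\big(\tfrac{r-N\sigma_n}{N}+\beta_n\big)+\tfrac{(N\sigma_n-r)(N-2)+N\beta_n}{\alpha N^2},$$ so that $\hat F(\beta,\frac1N\mathbf 1^\top\beta\,\mathbf 1)=F(\beta)$. Communication: $G$ is a connected undirected graph on $\{1,\dots,N\}$ with positive weights and weighted Laplacian $L$; $L_\sigma:=L$ and $L_\lambda:=L\otimes I_M$. Let $\tilde A_n\in\mathbb{R}^M$ be the $n$-th column of $\tilde A$, $\bar A:=\mathrm{blkdiag}(\tilde A_1,\dots,\tilde A_N)\in\mathbb{R}^{NM\times N}$, and $\bar d:=\mathrm{col}(d_1,\dots,d_N)\in\mathbb{R}^{NM}$. Parameters: $\kappa>0$; $\tau=\mathrm{diag}(\tau_n)$, $\upsilon=\mathrm{diag}(\upsilon_n)$, $\rho=\mathrm{diag}(\rho_n)$ in $\mathbb{R}^{N\times N}$; $\delta=\mathrm{blkdiag}(\delta_nI_M)$, $\eta=\mathrm{blkdiag}(\eta_nI_M)$ in $\mathbb{R}^{NM\times NM}$; all $\tau_n,\upsilon_n,\rho_n,\delta_n,\eta_n>0$. Iteration (IT): $$\begin{aligned} \beta^{k+1}&=\mathrm{proj}_\Omega[\beta^k-\tau(\hat F(\beta^k,\sigma^k)+\bar A^\top\lambda^k)],\\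 \psi^{k+1}&=\psi^k+\upsilon L_\sigma\sigma^k,\\ \sigma^{k+1}&=\sigma^k+\rho\big(\kappa(\beta^k-\sigma^k)-L_\sigma(2\psi^{k+1}-\psi^k)\big),\\ z^{k+1}&=z^k+\delta L_\lambda\lambda^k,\\ \lambda^{k+1}&=\mathrm{proj}_{\mathbb{R}^{NM}_+}\big[\lambda^k-\eta\big(L_\lambda\lambda^k+\bar d-\bar A(2\beta^{k+1}-\beta^k)+L_\lambda(2z^{k+1}-z^k)\big)\big]. \end{aligned}$$ For $\omega=(\beta,\psi,\sigma,z,\lambda)$: $$\mathcal A(\omega):=\big(\hat F(\beta,\sigma),\,0,\,\kappa(\sigma-\beta),\,0,\,\bar d+L_\lambda\lambda\big),$$ $$\mathcal B(\omega):=\big(\mathrm N_\Omega(\beta)+\bar A^\top\lambda,\ -L_\sigma\sigma,\ L_\sigma\psi,\ -L_\lambda\lambda,\ \mathrm N_{\mathbb{R}^{NM}_+}(\lambda)-\bar A\beta+L_\lambda z\big),$$ where $\mathrm N_S$ is the normal cone of $S$ (empty outside $S$). Finally, $$\Phi:=\begin{bmatrix}\tau^{-1}&0&0&0&-\bar A^\top\\0&\upsilon^{-1}&L_\sigma&0&0\\0&L_\sigma&\rho^{-1}&0&0\\0&0&0&\delta^{-1}&L_\lambda\\-\bar A&0&0&L_\lambda&\eta^{-1}\end{bmatrix}.$$ *)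

theory Defs
  imports "HOL-Analysis.Analysis"
begin

text \<open>Aggregators are indexed by a finite type 'n (N = CARD('n)), lines by a finite
type 'h (H = CARD('h)).  The constraint index set of size M = 2N + 2H is the
sum type 'n + 'n + 'h + 'h.  Vectors of R^{NM} are elements of (R^M)^N, i.e.
one block of length M per agent.\<close>

type_synonym ('n,'h) midx = "'n + 'n + 'h + 'h"
type_synonym ('n,'h) state =
  "(real^'n) \<times> (real^'n) \<times> (real^'n) \<times> ((real^('n,'h) midx)^'n) \<times> ((real^('n,'h) midx)^'n)"

definition Omega :: "real \<Rightarrow> real \<Rightarrow> (real^'n) set" where
  "Omega lb ub = {x. \<forall>n. lb \<le> x$n \<and> x$n \<le> ub}"

definition posorth :: "(real^'m^'n) set" where
  "posorth = {x. \<forall>n m. 0 \<le> x$n$m}"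

definition normal_cone :: "('a::real_inner) set \<Rightarrow> 'a \<Rightarrow> 'a set" where
  "normal_cone S x = (if x \<in> S then {g. \<forall>y\<in>S. g \<bullet> (y - x) \<le> 0} else {})"

definition Amat :: "real^'n^'n" where
  "Amat = (\<chi> i j. (if i = j then 1 else 0) - 1 / real CARD('n))"

definition cvec :: "real \<Rightarrow> real^'n" where
  "cvec r = (r / real CARD('n)) *\<^sub>R (1::real^'n)"

definition stack4 :: "real^'n \<Rightarrow> real^'n \<Rightarrow> real^'h \<Rightarrow> real^'h \<Rightarrow> real^('n,'h) midx" where
  "stack4 p q s t = (\<chi> i. case i of Inl k \<Rightarrow> p$k | Inr (Inl k) \<Rightarrow> q$k
                      | Inr (Inr (Inl l)) \<Rightarrow> s$l | Inr (Inr (Inr l)) \<Rightarrow> t$l)"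

definition Atilde :: "real^'n^'h \<Rightarrow> real^'n^('n,'h) midx" where
  "Atilde Pmat = (\<chi> i j. case i of Inl k \<Rightarrow> (Amat::real^'n^'n)$k$j
                   | Inr (Inl k) \<Rightarrow> - ((Amat::real^'n^'n)$k$j)
                   | Inr (Inr (Inl l)) \<Rightarrow> - ((Pmat ** (Amat::real^'n^'n))$l$j)
                   | Inr (Inr (Inr l)) \<Rightarrow> (Pmat ** (Amat::real^'n^'n))$l$j)"

definition dvec :: "real \<Rightarrow> real^'n \<Rightarrow> real^'h \<Rightarrow> real^'n \<Rightarrow> real^'n^'h \<Rightarrow> real^('n,'h) midx" where
  "dvec r xhat fhat e Pmat =
     stack4 (xhat - cvec r) (cvec r) (fhat - Pmat *v (e - cvec r)) (fhat + Pmat *v (e - cvec r))"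

definition dloc :: "real \<Rightarrow> real^'n \<Rightarrow> real^'h \<Rightarrow> real^'n \<Rightarrow> real^'n^'h \<Rightarrow> 'n \<Rightarrow> real^('n,'h) midx" where
  "dloc r xhat fhat e Pmat n =
     (1 / real CARD('n)) *\<^sub>R stack4 (- cvec r) (cvec r) (fhat + Pmat *v cvec r) (fhat - Pmat *v cvec r)
     + stack4 ((xhat$n) *\<^sub>R axis n 1) 0 (- ((e$n) *\<^sub>R (Pmat *v axis n 1))) ((e$n) *\<^sub>R (Pmat *v axis n 1))"

definition dbar :: "real \<Rightarrow> real^'n \<Rightarrow> real^'h \<Rightarrow> real^'n \<Rightarrow> real^'n^'h \<Rightarrow> (real^('n,'h) midx)^'n" where
  "dbar r xhat fhat e Pmat = (\<chi> n. dloc r xhat fhat e Pmat n)"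

definition Kset :: "real \<Rightarrow> real \<Rightarrow> real \<Rightarrow> real^'n \<Rightarrow> real^'h \<Rightarrow> real^'n \<Rightarrow> real^'n^'h \<Rightarrow> (real^'n) set" where
  "Kset lb ub r xhat fhat e Pmat =
     {x \<in> Omega lb ub. \<forall>i. (Atilde Pmat *v x)$i \<le> dvec r xhat fhat e Pmat $ i}"

definition Cd :: "real^'n \<Rightarrow> real^'n \<Rightarrow> 'n \<Rightarrow> real \<Rightarrow> real" where
  "Cd a b n x = 2 * a$n * x + b$n"

definition Fgame :: "real \<Rightarrow> real \<Rightarrow> real^'n \<Rightarrow> real^'n \<Rightarrow> real^'n \<Rightarrow> real^'n" where
  "Fgame r alpha a b x = (let N = real CARD('n); s = (\<Sum>i\<in>UNIV. x$i) in
     (\<chi> n. (N - 1) / N * Cd a b n ((r - s) / N + x$n)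
            + ((s - r) * (N - 2) + N * x$n) / (alpha * N^2)))"

definition Fhat :: "real \<Rightarrow> real \<Rightarrow> real^'n \<Rightarrow> real^'n \<Rightarrow> real^'n \<Rightarrow> real^'n \<Rightarrow> real^'n" where
  "Fhat r alpha a b x sg = (let N = real CARD('n) in
     (\<chi> n. (N - 1) / N * Cd a b n ((r - N * sg$n) / N + x$n)
            + ((N * sg$n - r) * (N - 2) + N * x$n) / (alpha * N^2)))"

definition vGNE :: "real \<Rightarrow> real \<Rightarrow> real \<Rightarrow> real \<Rightarrow> real^'n \<Rightarrow> real^'n \<Rightarrow> real^'n \<Rightarrow> real^'h
                    \<Rightarrow> real^'n \<Rightarrow> real^'n^'h \<Rightarrow> real^'n \<Rightarrow> bool" where
  "vGNE lb ub r alpha a b xhat fhat e Pmat x \<longleftrightarrow>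
     x \<in> Kset lb ub r xhat fhat e Pmat \<and>
     (\<forall>y \<in> Kset lb ub r xhat fhat e Pmat. 0 \<le> (y - x) \<bullet> Fgame r alpha a b x)"

text \<open>Weighted Laplacian of a weighted graph given by weights w (w i j > 0 iff edge),
applied blockwise (L \<otimes> I) when the entries are vectors.\<close>
definition Lap :: "('n::finite \<Rightarrow> 'n \<Rightarrow> real) \<Rightarrow> ('a::real_vector)^'n \<Rightarrow> 'a^'n" where
  "Lap w x = (\<chi> i. \<Sum>j\<in>UNIV. w i j *\<^sub>R (x$i - x$j))"

definition connected_weighted_graph :: "('n \<Rightarrow> 'n \<Rightarrow> real) \<Rightarrow> bool" where
  "connected_weighted_graph w \<longleftrightarrow>
     (\<forall>i j. w i j = w j i) \<and> (\<forall>i j. 0 \<le> w i j) \<and>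
     (\<forall>i j. (i, j) \<in> {(p, q). 0 < w p q}\<^sup>*)"

definition Abar :: "real^'n^'h \<Rightarrow> real^'n \<Rightarrow> (real^('n,'h) midx)^'n" where
  "Abar Pmat x = (\<chi> n. x$n *\<^sub>R column n (Atilde Pmat))"

definition AbarT :: "real^'n^'h \<Rightarrow> (real^('n,'h) midx)^'n \<Rightarrow> real^'n" where
  "AbarT Pmat y = (\<chi> n. column n (Atilde Pmat) \<bullet> y$n)"

definition dsc :: "real^'n \<Rightarrow> ('a::real_vector)^'n \<Rightarrow> 'a^'n" where
  "dsc t v = (\<chi> n. t$n *\<^sub>R v$n)"

definition vinv :: "real^'n \<Rightarrow> real^'n" where
  "vinv t = (\<chi> n. inverse (t$n))"

definition opA :: "real \<Rightarrow> real \<Rightarrow> real^'n \<Rightarrow> real^'n \<Rightarrow> real^'n \<Rightarrow> real^'h \<Rightarrow> real^'n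
                   \<Rightarrow> real^'n^'h \<Rightarrow> ('n \<Rightarrow> 'n \<Rightarrow> real) \<Rightarrow> real \<Rightarrow> ('n,'h) state \<Rightarrow> ('n,'h) state" where
  "opA r alpha a b xhat fhat e Pmat w kappa om = (case om of (x, psi, sg, z, lam) \<Rightarrow>
     (Fhat r alpha a b x sg, 0, kappa *\<^sub>R (sg - x), 0, dbar r xhat fhat e Pmat + Lap w lam))"

definition opB :: "real \<Rightarrow> real \<Rightarrow> real^'n^'h \<Rightarrow> ('n \<Rightarrow> 'n \<Rightarrow> real)
                   \<Rightarrow> ('n::finite,'h::finite) state \<Rightarrow> ('n,'h) state set" where
  "opB lb ub Pmat w om = (case om of (x, psi, sg, z, lam) \<Rightarrow>
     {(g + AbarT Pmat lam, - Lap w sg, Lap w psi, - Lap w lam, h - Abar Pmat x + Lap w z) | g h.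
        g \<in> normal_cone (Omega lb ub) x \<and> h \<in> normal_cone posorth lam})"

definition PhiM :: "real^'n^'h \<Rightarrow> ('n \<Rightarrow> 'n \<Rightarrow> real) \<Rightarrow> real^'n \<Rightarrow> real^'n \<Rightarrow> real^'n \<Rightarrow> real^'n
                    \<Rightarrow> real^'n \<Rightarrow> ('n::finite,'h::finite) state \<Rightarrow> ('n,'h) state" where
  "PhiM Pmat w tau ups rho delta eta om = (case om of (x, psi, sg, z, lam) \<Rightarrow>
     (dsc (vinv tau) x - AbarT Pmat lam,
      dsc (vinv ups) psi + Lap w sg,
      Lap w psi + dsc (vinv rho) sg,
      dsc (vinv delta) z + Lap w lam,
      - Abar Pmat x + Lap w z + dsc (vinv eta) lam))"

text \<open>Forward operator U_Phi = Id - Phi^{-1} A and backward (resolvent) operator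
V_Phi = (Id + Phi^{-1} B)^{-1}, the latter as a set-valued map.\<close>
definition fwdU :: "('s \<Rightarrow> 's) \<Rightarrow> ('s \<Rightarrow> 's) \<Rightarrow> 's::ab_group_add \<Rightarrow> 's" where
  "fwdU P A om = om - inv P (A om)"

definition resV :: "('s \<Rightarrow> 's) \<Rightarrow> ('s \<Rightarrow> 's set) \<Rightarrow> 's::ab_group_add \<Rightarrow> 's set" where
  "resV P B x = {y. x \<in> (\<lambda>g. y + inv P g) ` B y}"

definition IT_step :: "real \<Rightarrow> real \<Rightarrow> real \<Rightarrow> real \<Rightarrow> real^'n \<Rightarrow> real^'n \<Rightarrow> real^'n \<Rightarrow> real^'h
     \<Rightarrow> real^'n \<Rightarrow> real^'n^'h \<Rightarrow> ('n \<Rightarrow> 'n \<Rightarrow> real) \<Rightarrow> real \<Rightarrow> real^'n \<Rightarrow> real^'n \<Rightarrow> real^'n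
     \<Rightarrow> real^'n \<Rightarrow> real^'n \<Rightarrow> ('n::finite,'h::finite) state \<Rightarrow> ('n,'h) state" where
  "IT_step lb ub r alpha a b xhat fhat e Pmat w kappa tau ups rho delta eta om =
     (case om of (x, psi, sg, z, lam) \<Rightarrow>
       let x' = closest_point (Omega lb ub) (x - dsc tau (Fhat r alpha a b x sg + AbarT Pmat lam));
           psi' = psi + dsc ups (Lap w sg);
           sg' = sg + dsc rho (kappa *\<^sub>R (x - sg) - Lap w (2 *\<^sub>R psi' - psi));
           z' = z + dsc delta (Lap w lam);
           lam' = closest_point posorth
                    (lam - dsc eta (Lap w lam + dbar r xhat fhat e Pmat
                                     - Abar Pmat (2 *\<^sub>R x' - x) + Lap w (2 *\<^sub>R z' - z)))
       in (x', psi', sg', z', lam'))"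

end

theory Submission imports Defs begin

text \<open>Since PhiM is linear and positive definite it is invertible, so y lies in the resolvent of
  PhiM\<inverse>opB at x exactly when PhiM (x - y) \<in> opB y.  The off-diagonal blocks of PhiM
  cancel the skew coupling terms of opB, so this inclusion is solved block by block by projections
  and linear updates; at the forward point of om the solution is the (IT) update.  Fixed points of
  a forward-backward map are the zeros of opA + opB.  At such a zero the \<psi>- and z-blocks say
  L \<sigma> = 0 and L \<lambda> = 0, so by connectivity \<sigma> and \<lambda> are in consensus;
  summing the \<sigma>-block over the agents identifies \<sigma> with the average bid,
  and summing the \<lambda>-block yields the KKT system of VI(K, F) with multiplier \<gamma>,
  which suffices for a v-GNE.\<close>

section \<open>Forward-backward steps with an explicit resolvent\<close>

lemma bij_if_linear_pos_def:
  fixes P :: "'a::euclidean_space \<Rightarrow> 'a"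
  assumes lin: "linear P" and pos: "\<And>x. x \<noteq> 0 \<Longrightarrow> 0 < x \<bullet> P x"
  shows "bij P"
proof -
  have "inj P"
    unfolding linear_injective_0[OF lin] using pos by (metis inner_zero_right less_irrefl)
  then show ?thesis using linear_inj_imp_surj[OF lin] by (simp add: bij_def)
qed

lemma mem_resV_iff:
  assumes "bij P"
  shows "y \<in> resV P B x \<longleftrightarrow> P (x - y) \<in> B y"
proof -
  have "y \<in> resV P B x \<longleftrightarrow> (\<exists>g\<in>B y. inv P g = x - y)"
    unfolding resV_def image_iff mem_Collect_eq
    by (metis add_diff_cancel_left' diff_add_cancel)
  also have "\<dots> \<longleftrightarrow> P (x - y) \<in> B y"
    by (metis bij_inv_eq_iff[OF assms])
  finally show ?thesis .
qed

lemma fwdU_diff: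
  assumes "linear P" "surj P"
  shows "P (fwdU P A om - y) = P (om - y) - A om"
proof -
  have "fwdU P A om - y = (om - y) - inv P (A om)" by (simp add: fwdU_def algebra_simps)
  then show ?thesis by (simp add: linear_diff[OF assms(1)] surj_f_inv_f[OF assms(2)])
qed

lemma resV_unique:
  assumes "bij P" and solves: "\<And>om y c. P (om - y) - c \<in> B y \<longleftrightarrow> y = G om c"
  shows "\<exists>!y. y \<in> resV P B x"
  using solves[of x _ 0] by (simp add: mem_resV_iff[OF assms(1)])

lemma resV_fwdU:
  assumes "linear P" "bij P" and solves: "\<And>om y c. P (om - y) - c \<in> B y \<longleftrightarrow> y = G om c"
  shows "resV P B (fwdU P A om) = {G om (A om)}"
proof -
  have "y \<in> resV P B (fwdU P A om) \<longleftrightarrow> y = G om (A om)" for y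
    using solves[of om y "A om"]
    by (simp add: mem_resV_iff[OF assms(2)] fwdU_diff[OF assms(1) bij_is_surj[OF assms(2)]])
  then show ?thesis by blast
qed

lemma zero_in_step_inclusion:
  assumes "linear P" and solves: "\<And>om y c. P (om - y) - c \<in> B y \<longleftrightarrow> y = G om c"
  shows "0 \<in> (\<lambda>g. A om + g + P (G om (A om) - om)) ` B (G om (A om))"
proof (rule image_eqI)
  show "P (om - G om (A om)) - A om \<in> B (G om (A om))" using solves by simp
  show "0 = A om + (P (om - G om (A om)) - A om) + P (G om (A om) - om)"
    by (simp add: linear_diff[OF assms(1)])
qed

lemma zero_in_sum_iff_fixed_point:
  assumes "linear P" and solves: "\<And>om y c. P (om - y) - c \<in> B y \<longleftrightarrow> y = G om c"
  shows "0 \<in> (\<lambda>g. A om + g) ` B om \<longleftrightarrow> G om (A om) = om"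
proof -
  have "0 \<in> (\<lambda>g. A om + g) ` B om \<longleftrightarrow> - A om \<in> B om"
    by (auto simp: image_iff add_eq_0_iff)
  also have "\<dots> \<longleftrightarrow> P (om - om) - A om \<in> B om" by (simp add: linear_0[OF assms(1)])
  also have "\<dots> \<longleftrightarrow> G om (A om) = om" using solves[of om om "A om"] by auto
  finally show ?thesis .
qed

lemma normal_cone_closest_point_iff:
  fixes S :: "'a::euclidean_space set"
  assumes "closed S" "convex S" "S \<noteq> {}"
  shows "u - y \<in> normal_cone S y \<longleftrightarrow> y = closest_point S u"
proof
  assume h: "u - y \<in> normal_cone S y"
  then have y: "y \<in> S" by (simp add: normal_cone_def split: if_splits)
  let ?p = "closest_point S u"
  have p: "?p \<in> S" using closest_point_in_set assms by blast
  have "(u - y) \<bullet> (?p - y) \<le> 0" using h y p by (simp add: normal_cone_def)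
  moreover have "(u - ?p) \<bullet> (y - ?p) \<le> 0" using closest_point_dot[OF assms(2,1) y] .
  ultimately have "(?p - y) \<bullet> (?p - y) \<le> 0"
    by (simp add: inner_diff_left inner_diff_right inner_commute)
  then have "(?p - y) \<bullet> (?p - y) = 0" using inner_ge_zero[of "?p - y"] by linarith
  then show "y = ?p" by simp
next
  assume "y = closest_point S u"
  then show "u - y \<in> normal_cone S y"
    using closest_point_in_set[OF assms(1,3)] closest_point_dot[OF assms(2,1)]
    by (auto simp: normal_cone_def)
qed

section \<open>The explicit resolvent of opB\<close>

lemma linear_Lap: "linear (Lap w :: 'a::real_vector^'n::finite \<Rightarrow> 'a^'n)"
  by (rule linearI)
    (auto simp: Lap_def vec_eq_iff scaleR_sum_right simp flip: sum.distrib intro!: sum.cong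
          simp: algebra_simps)

lemma linear_dsc: "linear (dsc t :: 'a::real_vector^'n::finite \<Rightarrow> 'a^'n)"
  by (rule linearI) (simp_all add: dsc_def vec_eq_iff algebra_simps)

lemma linear_Abar: "linear (Abar P)"
  by (rule linearI) (simp_all add: Abar_def vec_eq_iff algebra_simps)

lemma linear_AbarT: "linear (AbarT P)"
  by (rule linearI) (simp_all add: AbarT_def vec_eq_iff inner_add_right)

lemmas linear_simps =
  linear_add[OF linear_Lap] linear_diff[OF linear_Lap] linear_cmul[OF linear_Lap]
  linear_neg[OF linear_Lap] linear_0[OF linear_Lap]
  linear_add[OF linear_dsc] linear_diff[OF linear_dsc] linear_cmul[OF linear_dsc]
  linear_neg[OF linear_dsc] linear_0[OF linear_dsc]
  linear_add[OF linear_Abar] linear_diff[OF linear_Abar] linear_cmul[OF linear_Abar]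
  linear_neg[OF linear_Abar]
  linear_add[OF linear_AbarT] linear_diff[OF linear_AbarT] linear_cmul[OF linear_AbarT]
  linear_neg[OF linear_AbarT]

lemma linear_PhiM: "linear (PhiM P w tau ups rho delta eta)"
  by (rule linearI) (auto simp: PhiM_def linear_simps algebra_simps split: prod.splits)

lemma Omega_eq_cbox: "Omega lb ub = cbox (vec lb) (vec ub)"
  by (auto simp: Omega_def mem_box_cart)

lemma Omega_nonempty: "lb \<le> ub \<Longrightarrow> Omega lb ub \<noteq> {}"
proof -
  assume "lb \<le> ub"
  then have "vec lb \<in> Omega lb ub" by (simp add: Omega_def)
  then show ?thesis by blast
qed

lemma closed_posorth: "closed (posorth :: (real^'m::finite^'n::finite) set)"
proof -
  have "posorth = (\<Inter>n. \<Inter>m. {x::real^'m^'n. 0 \<le> x$n$m})" by (auto simp: posorth_def)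
  moreover have "closed {x::real^'m^'n. 0 \<le> x$n$m}" for n m
    by (intro closed_Collect_le continuous_intros)
  ultimately show ?thesis by (metis (no_types, lifting) closed_INT)
qed

lemma convex_posorth: "convex posorth"
  unfolding convex_def posorth_def by (auto intro!: add_nonneg_nonneg)

lemma zero_in_posorth: "0 \<in> posorth"
  by (simp add: posorth_def)

lemma normal_cone_Omega_iff:
  "g \<in> normal_cone (Omega lb ub) y \<longleftrightarrow>
     y \<in> Omega lb ub \<and> (\<forall>n s. lb \<le> s \<and> s \<le> ub \<longrightarrow> g$n * (s - y$n) \<le> 0)"
proof
  assume g: "g \<in> normal_cone (Omega lb ub) y"
  then have y: "y \<in> Omega lb ub" by (simp add: normal_cone_def split: if_splits)
  have "g$n * (s - y$n) \<le> 0" if "lb \<le> s" "s \<le> ub" for n s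
  proof -
    let ?z = "\<chi> i. if i = n then s else y$i"
    have "?z \<in> Omega lb ub" using y that by (auto simp: Omega_def)
    then have "g \<bullet> (?z - y) \<le> 0" using g y by (simp add: normal_cone_def)
    moreover have "?z - y = (s - y$n) *\<^sub>R axis n 1" by (simp add: vec_eq_iff axis_def)
    ultimately show ?thesis by (simp add: inner_axis mult.commute)
  qed
  with y show "y \<in> Omega lb ub \<and> (\<forall>n s. lb \<le> s \<and> s \<le> ub \<longrightarrow> g$n * (s - y$n) \<le> 0)"
    by blast
next
  assume "y \<in> Omega lb ub \<and> (\<forall>n s. lb \<le> s \<and> s \<le> ub \<longrightarrow> g$n * (s - y$n) \<le> 0)"
  then show "g \<in> normal_cone (Omega lb ub) y"
    unfolding normal_cone_def by (auto simp: inner_vec_def Omega_def intro!: sum_nonpos)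
qed

lemma normal_cone_posorth_iff:
  "h \<in> normal_cone posorth l \<longleftrightarrow> l \<in> posorth \<and> (\<forall>n m. h$n$m \<le> 0 \<and> h$n$m * l$n$m = 0)"
proof
  assume h: "h \<in> normal_cone posorth l"
  then have l: "l \<in> posorth" by (simp add: normal_cone_def split: if_splits)
  have test: "h$n$m * (s - l$n$m) \<le> 0" if "0 \<le> s" for n m s
  proof -
    let ?z = "\<chi> i j. if i = n \<and> j = m then s else l$i$j"
    have "?z \<in> posorth" using l that by (auto simp: posorth_def)
    then have "h \<bullet> (?z - l) \<le> 0" using h l by (simp add: normal_cone_def)
    moreover have "?z - l = axis n ((s - l$n$m) *\<^sub>R axis m 1)" by (simp add: vec_eq_iff axis_def)
    ultimately show ?thesis by (simp add: inner_axis mult.commute)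
  qed
  have "h$n$m \<le> 0 \<and> h$n$m * l$n$m = 0" for n m
  proof -
    have l0: "0 \<le> l$n$m" using l by (simp add: posorth_def)
    have h0: "h$n$m \<le> 0" using test[of "l$n$m + 1" n m] l0 by simp
    have "0 \<le> h$n$m * l$n$m" using test[of 0 n m] by simp
    moreover have "h$n$m * l$n$m \<le> 0" using h0 l0 by (rule mult_nonpos_nonneg)
    ultimately show ?thesis using h0 by simp
  qed
  with l show "l \<in> posorth \<and> (\<forall>n m. h$n$m \<le> 0 \<and> h$n$m * l$n$m = 0)" by blast
next
  assume "l \<in> posorth \<and> (\<forall>n m. h$n$m \<le> 0 \<and> h$n$m * l$n$m = 0)"
  then have l: "l \<in> posorth" and hl: "\<And>n m. h$n$m \<le> 0 \<and> h$n$m * l$n$m = 0" by auto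
  have "h \<bullet> (y - l) \<le> 0" if y: "y \<in> posorth" for y
  proof -
    have hl0: "h$n$m * l$n$m = 0" for n m using hl by blast
    have "h \<bullet> (y - l) = (\<Sum>n\<in>UNIV. \<Sum>m\<in>UNIV. h$n$m * y$n$m)"
      by (simp add: inner_vec_def right_diff_distrib sum_subtractf hl0)
    also have "\<dots> \<le> 0"
      using hl y unfolding posorth_def by (blast intro: sum_nonpos mult_nonpos_nonneg)
    finally show ?thesis .
  qed
  with l show "h \<in> normal_cone posorth l" by (simp add: normal_cone_def)
qed

lemma dsc_in_normal_cone_Omega_iff:
  "\<forall>n. t$n > 0 \<Longrightarrow> dsc t g \<in> normal_cone (Omega lb ub) y \<longleftrightarrow> g \<in> normal_cone (Omega lb ub) y"
  unfolding normal_cone_Omega_iff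
  by (simp add: dsc_def mult.assoc mult_le_cancel_left_pos[of _ _ 0, simplified])

lemma dsc_in_normal_cone_posorth_iff:
  assumes "\<forall>n. t$n > 0"
  shows "dsc t h \<in> normal_cone posorth l \<longleftrightarrow> h \<in> normal_cone posorth l"
proof -
  have "t$n \<noteq> 0" for n using assms by (metis less_irrefl)
  then show ?thesis
    unfolding normal_cone_posorth_iff using assms
    by (simp add: dsc_def mult.assoc mult_le_cancel_left_pos[of _ _ 0, simplified])
qed

lemma vinv_pos: "\<forall>n. t$n > 0 \<Longrightarrow> \<forall>n. vinv t $ n > 0"
  by (simp add: vinv_def)

lemma dsc_vinv_dsc: "\<forall>n. t$n > 0 \<Longrightarrow> dsc (vinv t) (dsc t v) = v"
  and dsc_dsc_vinv: "\<forall>n. t$n > 0 \<Longrightarrow> dsc t (dsc (vinv t) v) = v"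
  by (simp_all add: vec_eq_iff dsc_def vinv_def less_imp_neq[symmetric])

lemma dsc_vinv_diff_eq_iff:
  assumes "\<forall>n. t$n > 0"
  shows "dsc (vinv t) (u - y) = d \<longleftrightarrow> y = u - dsc t d"
proof
  assume "dsc (vinv t) (u - y) = d"
  then have "u - y = dsc t d" using dsc_dsc_vinv[OF assms] by metis
  then show "y = u - dsc t d" by (simp add: algebra_simps)
qed (simp add: dsc_vinv_dsc[OF assms])

lemma scaled_normal_cone_Omega_iff_closest_point:
  assumes "\<forall>n. t$n > 0" "lb \<le> ub"
  shows "dsc (vinv t) (u - y) \<in> normal_cone (Omega lb ub) y \<longleftrightarrow> y = closest_point (Omega lb ub) u"
  unfolding dsc_in_normal_cone_Omega_iff[OF vinv_pos[OF assms(1)]]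
  using Omega_nonempty[OF assms(2)]
  by (intro normal_cone_closest_point_iff) (simp_all add: Omega_eq_cbox closed_cbox)

lemma scaled_normal_cone_posorth_iff_closest_point:
  assumes "\<forall>n. t$n > 0"
  shows "dsc (vinv t) (u - y) \<in> normal_cone posorth y \<longleftrightarrow> y = closest_point posorth u"
  unfolding dsc_in_normal_cone_posorth_iff[OF vinv_pos[OF assms]]
  using zero_in_posorth by (intro normal_cone_closest_point_iff closed_posorth convex_posorth) blast

text \<open>The solution y of PhiM (om - y) - c \<in> opB y, computed in the order
  \<beta>, \<psi>, \<sigma>, z, \<lambda>: each block of the inclusion only involves blocks computed
  before it.\<close>

definition resolvent_step :: "real \<Rightarrow> real \<Rightarrow> real^'n^'h \<Rightarrow> ('n \<Rightarrow> 'n \<Rightarrow> real) \<Rightarrow> real^'n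
     \<Rightarrow> real^'n \<Rightarrow> real^'n \<Rightarrow> real^'n \<Rightarrow> real^'n
     \<Rightarrow> ('n::finite,'h::finite) state \<Rightarrow> ('n,'h) state \<Rightarrow> ('n,'h) state" where
  "resolvent_step lb ub P w tau ups rho delta eta om c =
     (case om of (x, psi, sg, z, lam) \<Rightarrow> case c of (c1, c2, c3, c4, c5) \<Rightarrow>
       let x' = closest_point (Omega lb ub) (x - dsc tau (c1 + AbarT P lam));
           psi' = psi - dsc ups (c2 - Lap w sg);
           sg' = sg - dsc rho (c3 + Lap w (2 *\<^sub>R psi' - psi));
           z' = z - dsc delta (c4 - Lap w lam);
           lam' = closest_point posorth
                    (lam - dsc eta (c5 - Abar P (2 *\<^sub>R x' - x) + Lap w (2 *\<^sub>R z' - z)))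
       in (x', psi', sg', z', lam'))"

lemma IT_step_eq_resolvent_step:
  "IT_step lb ub r alpha a b xhat fhat e P w kappa tau ups rho delta eta om
     = resolvent_step lb ub P w tau ups rho delta eta om (opA r alpha a b xhat fhat e P w kappa om)"
  by (cases om) (simp add: IT_step_def resolvent_step_def opA_def Let_def linear_simps algebra_simps)

lemma mem_opB_iff:
  "(a1, a2, a3, a4, a5) \<in> opB lb ub P w (x, psi, sg, z, lam) \<longleftrightarrow>
     a1 - AbarT P lam \<in> normal_cone (Omega lb ub) x \<and> a2 = - Lap w sg \<and> a3 = Lap w psi
     \<and> a4 = - Lap w lam \<and> a5 + Abar P x - Lap w z \<in> normal_cone posorth lam"
  unfolding opB_def
  by (auto intro!: exI[where x="a1 - AbarT P lam"] exI[where x="a5 + Abar P x - Lap w z"])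

lemma PhiM_diff_minus_in_opB_iff:
  fixes P :: "real^'n::finite^'h::finite"
  assumes pos: "\<forall>n. tau$n > 0" "\<forall>n. ups$n > 0" "\<forall>n. rho$n > 0" "\<forall>n. delta$n > 0" "\<forall>n. eta$n > 0"
    and "lb \<le> ub"
  shows "PhiM P w tau ups rho delta eta (om - y) - c \<in> opB lb ub P w y
     \<longleftrightarrow> y = resolvent_step lb ub P w tau ups rho delta eta om c"
proof -
  obtain x psi sg z lam where om: "om = (x, psi, sg, z, lam)" by (cases om) auto
  obtain x' psi' sg' z' lam' where y: "y = (x', psi', sg', z', lam')" by (cases y) auto
  obtain c1 c2 c3 c4 c5 where c: "c = (c1, c2, c3, c4, c5)" by (cases c) auto
  have "dsc (vinv tau) (x - x') - AbarT P (lam - lam') - c1 - AbarT P lam'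
      = dsc (vinv tau) ((x - dsc tau (c1 + AbarT P lam)) - x')"
    by (simp add: linear_simps dsc_vinv_dsc[OF pos(1)] algebra_simps)
  then have x': "dsc (vinv tau) (x - x') - AbarT P (lam - lam') - c1 - AbarT P lam'
        \<in> normal_cone (Omega lb ub) x'
      \<longleftrightarrow> x' = closest_point (Omega lb ub) (x - dsc tau (c1 + AbarT P lam))"
    using scaled_normal_cone_Omega_iff_closest_point[OF pos(1) assms(6)] by simp
  have "dsc (vinv ups) (psi - psi') + Lap w (sg - sg') - c2 = - Lap w sg'
      \<longleftrightarrow> dsc (vinv ups) (psi - psi') = c2 - Lap w sg"
    by (auto simp: linear_simps algebra_simps)
  then have psi': "dsc (vinv ups) (psi - psi') + Lap w (sg - sg') - c2 = - Lap w sg'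
      \<longleftrightarrow> psi' = psi - dsc ups (c2 - Lap w sg)"
    using dsc_vinv_diff_eq_iff[OF pos(2)] by simp
  have "Lap w (psi - psi') + dsc (vinv rho) (sg - sg') - c3 = Lap w psi'
      \<longleftrightarrow> dsc (vinv rho) (sg - sg') = c3 + Lap w (2 *\<^sub>R psi' - psi)"
    unfolding vec_eq_iff by (simp add: linear_simps) (smt (verit))
  then have sg': "Lap w (psi - psi') + dsc (vinv rho) (sg - sg') - c3 = Lap w psi'
      \<longleftrightarrow> sg' = sg - dsc rho (c3 + Lap w (2 *\<^sub>R psi' - psi))"
    using dsc_vinv_diff_eq_iff[OF pos(3)] by simp
  have "dsc (vinv delta) (z - z') + Lap w (lam - lam') - c4 = - Lap w lam'
      \<longleftrightarrow> dsc (vinv delta) (z - z') = c4 - Lap w lam"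
    by (auto simp: linear_simps algebra_simps)
  then have z': "dsc (vinv delta) (z - z') + Lap w (lam - lam') - c4 = - Lap w lam'
      \<longleftrightarrow> z' = z - dsc delta (c4 - Lap w lam)"
    using dsc_vinv_diff_eq_iff[OF pos(4)] by simp
  have "- Abar P (x - x') + Lap w (z - z') + dsc (vinv eta) (lam - lam') - c5 + Abar P x' - Lap w z'
      = dsc (vinv eta) ((lam - dsc eta (c5 - Abar P (2 *\<^sub>R x' - x) + Lap w (2 *\<^sub>R z' - z))) - lam')"
    by (simp add: linear_simps dsc_vinv_dsc[OF pos(5)] vec_eq_iff algebra_simps)
  then have lam': "- Abar P (x - x') + Lap w (z - z') + dsc (vinv eta) (lam - lam') - c5
        + Abar P x' - Lap w z' \<in> normal_cone posorth lam'
      \<longleftrightarrow> lam' = closest_point posorth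
                   (lam - dsc eta (c5 - Abar P (2 *\<^sub>R x' - x) + Lap w (2 *\<^sub>R z' - z)))"
    using scaled_normal_cone_posorth_iff_closest_point[OF pos(5)] by simp
  show ?thesis
    unfolding om y c PhiM_def diff_Pair prod.case mem_opB_iff x' psi' sg' z' lam'
    by (simp add: resolvent_step_def Let_def) blast
qed

section \<open>Zeros of opA + opB\<close>

lemma sum_Lap_eq_0:
  assumes "\<forall>i j. w i j = w j i"
  shows "(\<Sum>i\<in>UNIV. Lap w v $ i) = 0"
proof -
  have "(\<Sum>i\<in>UNIV. Lap w v $ i)
      = (\<Sum>i\<in>UNIV. \<Sum>j\<in>UNIV. w i j *\<^sub>R v$i) - (\<Sum>i\<in>UNIV. \<Sum>j\<in>UNIV. w i j *\<^sub>R v$j)"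
    by (simp add: Lap_def scaleR_diff_right sum_subtractf)
  also have "(\<Sum>i\<in>UNIV. \<Sum>j\<in>UNIV. w i j *\<^sub>R v$j) = (\<Sum>j\<in>UNIV. \<Sum>i\<in>UNIV. w j i *\<^sub>R v$j)"
    using assms by (subst sum.swap) simp
  finally show ?thesis by simp
qed

lemma Lap_Dirichlet_form:
  fixes v :: "'a::real_inner^'n::finite"
  assumes "\<forall>i j. w i j = w j i"
  shows "2 * (\<Sum>i\<in>UNIV. v$i \<bullet> Lap w v $ i)
       = (\<Sum>i\<in>UNIV. \<Sum>j\<in>UNIV. w i j * ((v$i - v$j) \<bullet> (v$i - v$j)))"
proof -
  define S where "S = (\<Sum>i\<in>UNIV. \<Sum>j\<in>UNIV. w i j * (v$i \<bullet> (v$i - v$j)))"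
  have S: "(\<Sum>i\<in>UNIV. v$i \<bullet> Lap w v $ i) = S"
    by (simp add: S_def Lap_def inner_sum_right)
  have "S = (\<Sum>j\<in>UNIV. \<Sum>i\<in>UNIV. w j i * (v$i \<bullet> (v$i - v$j)))"
    unfolding S_def using assms by (subst sum.swap) simp
  then have "S + S = (\<Sum>i\<in>UNIV. \<Sum>j\<in>UNIV.
      w i j * (v$i \<bullet> (v$i - v$j)) + w i j * (v$j \<bullet> (v$j - v$i)))"
    by (simp add: S_def sum.distrib)
  also have "\<dots> = (\<Sum>i\<in>UNIV. \<Sum>j\<in>UNIV. w i j * ((v$i - v$j) \<bullet> (v$i - v$j)))"
    by (simp add: inner_diff_left inner_diff_right inner_commute algebra_simps)
  finally show ?thesis using S by simp
qed

lemma Lap_eq_0_imp_consensus: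
  fixes v :: "'a::real_inner^'n::finite"
  assumes g: "connected_weighted_graph w" and L: "Lap w v = 0"
  shows "v$i = v$j"
proof -
  have sym: "\<forall>i j. w i j = w j i" and nn: "\<And>i j. 0 \<le> w i j"
    and conn: "(i, j) \<in> {(p, q). 0 < w p q}\<^sup>*"
    using g by (auto simp: connected_weighted_graph_def)
  have terms_nonneg: "0 \<le> w p q * ((v$p - v$q) \<bullet> (v$p - v$q))" for p q
    using nn by simp
  have "(\<Sum>p\<in>UNIV. \<Sum>q\<in>UNIV. w p q * ((v$p - v$q) \<bullet> (v$p - v$q))) = 0"
    using Lap_Dirichlet_form[OF sym, of v] L by simp
  then have "w p q * ((v$p - v$q) \<bullet> (v$p - v$q)) = 0" for p q
    by (simp add: sum_nonneg_eq_0_iff sum_nonneg terms_nonneg)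
  then have edge: "v$p = v$q" if "0 < w p q" for p q
    using that by (metis less_irrefl mult_eq_0_iff inner_eq_zero_iff eq_iff_diff_eq_0)
  from conn show ?thesis
    by (induction rule: rtrancl_induct) (auto dest: edge)
qed

lemma sum_dbar: "(\<Sum>n\<in>UNIV. dbar r xhat fhat e P $ n) = dvec r xhat fhat e (P::real^'n::finite^'h::finite)"
proof (rule vec_eq_iff[THEN iffD2], rule allI)
  have N: "real CARD('n) \<noteq> 0" by simp
  have delta: "(c::real) * (if p then 1 else 0) = (if p then c else 0)" for c p by simp
  fix i :: "('n,'h) midx"
  consider k where "i = Inl k" | k where "i = Inr (Inl k)" | l where "i = Inr (Inr (Inl l))"
    | l where "i = Inr (Inr (Inr l))" by (metis sum.exhaust)
  then show "(\<Sum>n\<in>UNIV. dbar r xhat fhat e P $ n) $ i = dvec r xhat fhat e P $ i"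
    unfolding sum_component dbar_def dloc_def dvec_def
    by cases (simp_all add: stack4_def cvec_def matrix_vector_mult_basis sum.distrib sum_subtractf
        N column_def matrix_vector_mult_diff_distrib sum_negf,
      simp_all add: axis_def delta matrix_vector_mult_def mult.commute)
qed

lemma sum_Abar: "(\<Sum>n\<in>UNIV. Abar P x $ n) = Atilde P *v x"
  by (simp add: vec_eq_iff sum_component Abar_def column_def matrix_vector_mult_def mult.commute)

lemma inner_AbarT_const: "v \<bullet> AbarT P (\<chi> n. gam) = gam \<bullet> (Atilde P *v v)"
proof -
  have "v \<bullet> AbarT P (\<chi> n. gam) = (\<Sum>n\<in>UNIV. \<Sum>i\<in>UNIV. v$n * (Atilde P $ i $ n * gam $ i))"
    by (simp add: AbarT_def inner_vec_def column_def sum_distrib_left)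
  also have "\<dots> = (\<Sum>i\<in>UNIV. \<Sum>n\<in>UNIV. v$n * (Atilde P $ i $ n * gam $ i))"
    by (rule sum.swap)
  also have "\<dots> = gam \<bullet> (Atilde P *v v)"
    by (simp add: inner_vec_def matrix_vector_mult_def sum_distrib_left mult_ac)
  finally show ?thesis .
qed

lemma Fgame_eq_Fhat_average:
  fixes x :: "real^'n::finite"
  shows "Fgame r alpha a b x = Fhat r alpha a b x (((\<Sum>i\<in>UNIV. x$i) / real CARD('n)) *\<^sub>R 1)"
  by (simp add: Fgame_def Fhat_def Let_def vec_eq_iff)

lemma zero_in_opA_plus_opB_iff:
  "0 \<in> (\<lambda>g. opA r alpha a b xhat fhat e P w kappa (x, psi, sg, z, lam) + g)
          ` opB lb ub P w (x, psi, sg, z, lam)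
   \<longleftrightarrow> - Fhat r alpha a b x sg - AbarT P lam \<in> normal_cone (Omega lb ub) x
     \<and> Lap w sg = 0 \<and> Lap w psi = kappa *\<^sub>R (x - sg) \<and> Lap w lam = 0
     \<and> Abar P x - dbar r xhat fhat e P - Lap w z \<in> normal_cone posorth lam"
proof -
  let ?A = "opA r alpha a b xhat fhat e P w kappa (x, psi, sg, z, lam)"
  have "0 \<in> (\<lambda>g. ?A + g) ` opB lb ub P w (x, psi, sg, z, lam)
      \<longleftrightarrow> - ?A \<in> opB lb ub P w (x, psi, sg, z, lam)"
    by (auto simp: image_iff add_eq_0_iff)
  also have "- ?A = (- Fhat r alpha a b x sg, 0, kappa *\<^sub>R (x - sg), 0,
                     - dbar r xhat fhat e P - Lap w lam)"
    by (simp add: opA_def algebra_simps)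
  finally show ?thesis
    unfolding mem_opB_iff by (auto simp: algebra_simps)
qed

lemma consensus_average:
  fixes x sg psi :: "real^'n::finite"
  assumes g: "connected_weighted_graph w" and "kappa > 0"
    and Lsg: "Lap w sg = 0" and Lpsi: "Lap w psi = kappa *\<^sub>R (x - sg)"
  shows "sg = ((\<Sum>i\<in>UNIV. x$i) / real CARD('n)) *\<^sub>R 1"
proof -
  have sym: "\<forall>i j. w i j = w j i" using g by (simp add: connected_weighted_graph_def)
  have "kappa * ((\<Sum>i\<in>UNIV. x$i) - (\<Sum>i\<in>UNIV. sg$i)) = 0"
    using sum_Lap_eq_0[OF sym, of psi]
    by (simp add: Lpsi sum_subtractf sum_distrib_left right_diff_distrib)
  then have sums: "(\<Sum>i\<in>UNIV. sg$i) = (\<Sum>i\<in>UNIV. x$i)" using \<open>kappa > 0\<close> by simp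
  have "sg$j = (\<Sum>i\<in>UNIV. x$i) / real CARD('n)" for j
  proof -
    have "(\<Sum>i\<in>UNIV. sg$i) = (\<Sum>i\<in>(UNIV::'n set). sg$j)"
      using Lap_eq_0_imp_consensus[OF g Lsg] by (intro sum.cong) auto
    then show ?thesis using sums by (simp add: field_simps)
  qed
  then show ?thesis by (simp add: vec_eq_iff)
qed

lemma consensus_multiplier_KKT:
  assumes sym: "\<forall>i j. w i j = w j i"
    and nc: "Abar P x - dbar r xhat fhat e P - Lap w z \<in> normal_cone posorth (\<chi> n. gam)"
  shows "\<forall>m. 0 \<le> gam$m \<and> (Atilde P *v x)$m \<le> dvec r xhat fhat e P $ m
            \<and> gam$m * ((Atilde P *v x)$m - dvec r xhat fhat e P $ m) = 0"
proof
  fix m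
  define h where "h = Abar P x - dbar r xhat fhat e P - Lap w z"
  have gam: "0 \<le> gam$m" and h_nonpos: "\<And>n. h$n$m \<le> 0" and h_compl: "\<And>n. gam$m * h$n$m = 0"
    using nc unfolding h_def[symmetric] normal_cone_posorth_iff by (auto simp: posorth_def)
  have "(\<Sum>n\<in>UNIV. h$n) = Atilde P *v x - dvec r xhat fhat e P"
    unfolding h_def using sum_Lap_eq_0[OF sym, of z]
    by (simp add: sum_subtractf sum_dbar sum_Abar)
  then have hsum: "(Atilde P *v x)$m - dvec r xhat fhat e P $ m = (\<Sum>n\<in>UNIV. h$n$m)"
    by (metis sum_component vector_minus_component)
  have "(\<Sum>n\<in>UNIV. h$n$m) \<le> 0" using h_nonpos by (simp add: sum_nonpos)
  moreover have "gam$m * (\<Sum>n\<in>UNIV. h$n$m) = 0"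
    by (simp add: sum_distrib_left h_compl)
  ultimately show "0 \<le> gam$m \<and> (Atilde P *v x)$m \<le> dvec r xhat fhat e P $ m
      \<and> gam$m * ((Atilde P *v x)$m - dvec r xhat fhat e P $ m) = 0"
    using gam hsum by simp
qed

lemma vGNE_if_KKT:
  assumes nc: "- Fgame r alpha a b x - AbarT P (\<chi> n. gam) \<in> normal_cone (Omega lb ub) x"
    and KKT: "\<forall>m. 0 \<le> gam$m \<and> (Atilde P *v x)$m \<le> dvec r xhat fhat e P $ m
                \<and> gam$m * ((Atilde P *v x)$m - dvec r xhat fhat e P $ m) = 0"
  shows "vGNE lb ub r alpha a b xhat fhat e P x"
proof -
  have xO: "x \<in> Omega lb ub" using nc by (simp add: normal_cone_def split: if_splits)
  have "0 \<le> (y - x) \<bullet> Fgame r alpha a b x" if y: "y \<in> Kset lb ub r xhat fhat e P" for y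
  proof -
    have yO: "y \<in> Omega lb ub" and yK: "\<And>m. (Atilde P *v y)$m \<le> dvec r xhat fhat e P $ m"
      using y by (auto simp: Kset_def)
    have "(- Fgame r alpha a b x - AbarT P (\<chi> n. gam)) \<bullet> (y - x) \<le> 0"
      using nc xO yO by (simp add: normal_cone_def)
    then have "- ((y - x) \<bullet> Fgame r alpha a b x) \<le> (y - x) \<bullet> AbarT P (\<chi> n. gam)"
      by (simp add: inner_diff_left inner_diff_right inner_commute)
    also have "\<dots> = gam \<bullet> (Atilde P *v (y - x))" by (rule inner_AbarT_const)
    also have "\<dots> = (\<Sum>m\<in>UNIV. gam$m * ((Atilde P *v y)$m - (Atilde P *v x)$m))"
      by (simp add: inner_vec_def matrix_vector_mult_diff_distrib)
    also have "\<dots> = (\<Sum>m\<in>UNIV. gam$m * ((Atilde P *v y)$m - dvec r xhat fhat e P $ m))"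
      using KKT by (intro sum.cong) (auto simp: right_diff_distrib)
    also have "\<dots> \<le> 0"
      using KKT yK by (intro sum_nonpos mult_nonneg_nonpos) auto
    finally show ?thesis by simp
  qed
  then show ?thesis using xO KKT by (simp add: vGNE_def Kset_def)
qed

lemma zero_in_opA_plus_opB_imp_vGNE:
  fixes P :: "real^'n::finite^'h::finite"
  assumes g: "connected_weighted_graph w" and "kappa > 0"
    and zero: "0 \<in> (\<lambda>g. opA r alpha a b xhat fhat e P w kappa (x, psi, sg, z, lam) + g)
                    ` opB lb ub P w (x, psi, sg, z, lam)"
  shows "sg = ((\<Sum>i\<in>UNIV. x$i) / real CARD('n)) *\<^sub>R 1
      \<and> (\<exists>gam. (\<forall>m. 0 \<le> gam$m) \<and> lam = (\<chi> n. gam))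
      \<and> vGNE lb ub r alpha a b xhat fhat e P x"
proof -
  have sym: "\<forall>i j. w i j = w j i" using g by (simp add: connected_weighted_graph_def)
  note conds = zero[unfolded zero_in_opA_plus_opB_iff]
  have sg: "sg = ((\<Sum>i\<in>UNIV. x$i) / real CARD('n)) *\<^sub>R 1"
    using consensus_average[OF g \<open>kappa > 0\<close>] conds by blast
  define gam where "gam = lam $ undefined"
  have "Lap w lam = 0" using conds by blast
  then have "lam$n = lam$undefined" for n by (rule Lap_eq_0_imp_consensus[OF g])
  then have lam: "lam = (\<chi> n. gam)" unfolding gam_def by (simp add: vec_eq_iff)
  have KKT: "\<forall>m. 0 \<le> gam$m \<and> (Atilde P *v x)$m \<le> dvec r xhat fhat e P $ m
      \<and> gam$m * ((Atilde P *v x)$m - dvec r xhat fhat e P $ m) = 0"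
    using conds lam by (intro consensus_multiplier_KKT[OF sym, of P x r xhat fhat e z]) simp
  have "vGNE lb ub r alpha a b xhat fhat e P x"
    using conds lam sg KKT by (intro vGNE_if_KKT[of _ _ _ _ x P gam]) (simp_all add: Fgame_eq_Fhat_average)
  then show ?thesis using sg lam KKT by blast
qed

theorem theorem1:
  fixes r alpha lb ub kappa :: real
    and a b xhat e tau ups rho delta eta :: "real^'n::finite"
    and fhat :: "real^'h::finite"
    and Pmat :: "real^'n^'h"
    and w :: "'n \<Rightarrow> 'n \<Rightarrow> real"
  assumes N2: "CARD('n) \<ge> 2"
    and r: "r \<ge> 0" and alpha: "alpha > 0"
    and ab: "\<forall>n. a$n > 0" "\<forall>n. b$n > 0"
    and bnds: "lb < ub"
    and fhat: "\<forall>l. fhat$l \<ge> 0"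
    and slater: "\<exists>x\<in>Omega lb ub. \<forall>i. (Atilde Pmat *v x)$i < dvec r xhat fhat e Pmat $ i"
    and graph: "connected_weighted_graph w"
    and kappa: "kappa > 0"
    and steps: "\<forall>n. tau$n > 0" "\<forall>n. ups$n > 0" "\<forall>n. rho$n > 0" "\<forall>n. delta$n > 0" "\<forall>n. eta$n > 0"
    and PD: "\<forall>om::('n,'h) state. om \<noteq> 0 \<longrightarrow> 0 < om \<bullet> PhiM Pmat w tau ups rho delta eta om"
  defines "PP \<equiv> PhiM Pmat w tau ups rho delta eta"
    and "AA \<equiv> opA r alpha a b xhat fhat e Pmat w kappa"
    and "BB \<equiv> opB lb ub Pmat w"
    and "IT \<equiv> IT_step lb ub r alpha a b xhat fhat e Pmat w kappa tau ups rho delta eta"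
  shows
    "(\<forall>x. \<exists>!y. y \<in> resV PP BB x)
   \<and> (\<forall>x psi sg z lam. x \<in> Omega lb ub \<and> lam \<in> posorth \<longrightarrow>
        resV PP BB (fwdU PP AA (x, psi, sg, z, lam)) = {IT (x, psi, sg, z, lam)}
      \<and> 0 \<in> (\<lambda>g. AA (x, psi, sg, z, lam) + g + PP (IT (x, psi, sg, z, lam) - (x, psi, sg, z, lam)))
              ` BB (IT (x, psi, sg, z, lam)))
   \<and> (\<forall>om. (om \<in> resV PP BB (fwdU PP AA om) \<longleftrightarrow> 0 \<in> (\<lambda>g. AA om + g) ` BB om)
         \<and> (IT om = om \<longleftrightarrow> 0 \<in> (\<lambda>g. AA om + g) ` BB om))
   \<and> (\<forall>x psi sg z lam. 0 \<in> (\<lambda>g. AA (x, psi, sg, z, lam) + g) ` BB (x, psi, sg, z, lam) \<longrightarrow>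
        sg = ((\<Sum>i\<in>UNIV. x$i) / real CARD('n)) *\<^sub>R (1::real^'n)
      \<and> (\<exists>gam. (\<forall>m. 0 \<le> gam$m) \<and> lam = (\<chi> n. gam))
      \<and> vGNE lb ub r alpha a b xhat fhat e Pmat x)"
proof -
  have lin: "linear PP" unfolding PP_def by (rule linear_PhiM)
  have bij: "bij PP"
    using PD unfolding PP_def by (intro bij_if_linear_pos_def linear_PhiM) auto
  have solves: "PP (om - y) - c \<in> BB y \<longleftrightarrow>
      y = resolvent_step lb ub Pmat w tau ups rho delta eta om c" for om y c
    unfolding PP_def BB_def using bnds by (intro PhiM_diff_minus_in_opB_iff[OF steps]) simp
  have IT: "IT om = resolvent_step lb ub Pmat w tau ups rho delta eta om (AA om)" for om
    unfolding IT_def AA_def by (rule IT_step_eq_resolvent_step)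
  have fixed: "0 \<in> (\<lambda>g. AA om + g) ` BB om \<longleftrightarrow> IT om = om" for om
    using zero_in_sum_iff_fixed_point[OF lin solves] IT by simp
  have res: "resV PP BB (fwdU PP AA om) = {IT om}" for om
    using resV_fwdU[OF lin bij solves] IT by simp
  have step: "0 \<in> (\<lambda>g. AA om + g + PP (IT om - om)) ` BB (IT om)" for om
    using zero_in_step_inclusion[OF lin solves] IT by simp
  have fixed_res: "om \<in> resV PP BB (fwdU PP AA om) \<longleftrightarrow> 0 \<in> (\<lambda>g. AA om + g) ` BB om" for om
    using res fixed by auto
  have vGNE: "0 \<in> (\<lambda>g. AA (x, psi, sg, z, lam) + g) ` BB (x, psi, sg, z, lam) \<Longrightarrow>
      sg = ((\<Sum>i\<in>UNIV. x$i) / real CARD('n)) *\<^sub>R 1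
      \<and> (\<exists>gam. (\<forall>m. 0 \<le> gam$m) \<and> lam = (\<chi> n. gam))
      \<and> vGNE lb ub r alpha a b xhat fhat e Pmat x" for x psi sg z lam
    unfolding AA_def BB_def by (rule zero_in_opA_plus_opB_imp_vGNE[OF graph kappa])
  show ?thesis
    using resV_unique[OF bij solves] res step fixed fixed_res vGNE by blast
qed

end
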